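(* Let $m\ge 1$ be an integer and $y=(y_0,\dots,y_{2m})\in\mathbb{R}^{2m+1}_+$. Then the function $$\mathcal{I}(x)=\mathcal{I}(y\,\|\,x*x)=\sum_{i=0}^{2m}\Big(y_i\log\frac{y_i}{(x*x)_i}-y_i+(x*x)_i\Big)$$ attains its minimum over $x\in\mathbb{R}^{m+1}_+$; i.e. the problem of minimizing $\mathcal{I}(y\|x*x)$ over $x\in\mathbb{R}^{m+1}_+$ admits a solution.
   Context: For $x=(x_0,\dots,x_m)\in\mathbb{R}^{m+1}$ set $x_k=0$ for $k<0$ and $k>m$, and define the autoconvolution $(x*x)_i=\sum_{j=0}^{i}x_{i-j}x_j$ for $i=0,\dots,2m$. For nonnegative vectors $u,v$ of equal length, the I-divergence is $\mathcal{I}(u\|v)=\sum_i\big(u_i\log\frac{u_i}{v_i}-u_i+v_i\big)$ if $u_i=0$ whenever $v_i=0$ (with the convention $0\log 0=0$, $0\log(0/0)=0$), and $\mathcal{I}(u\|v)=\infty$ if some $u_i>0$ has $v_i=0$. *)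

theory Defs
  imports "HOL-Analysis.Analysis"
begin

text \<open>Autoconvolution of a vector x = (x_0,...,x_m), represented as a function
  nat => real that vanishes outside {0..m}: (x*x)_i = sum_{j=0}^{i} x_{i-j} x_j.\<close>
definition autoconv :: "(nat \<Rightarrow> real) \<Rightarrow> nat \<Rightarrow> real" where
  "autoconv x i = (\<Sum>j\<le>i. x (i - j) * x j)"

text \<open>I-divergence of nonnegative vectors u, v of length n (indices 0..n-1),
  with values in the extended reals; conventions 0 log 0 = 0, 0 log (0/0) = 0,
  and value infinity if some u_i > 0 has v_i = 0.\<close>
definition idiv :: "nat \<Rightarrow> (nat \<Rightarrow> real) \<Rightarrow> (nat \<Rightarrow> real) \<Rightarrow> ereal" where
  "idiv n u v =
     (if \<exists>i<n. u i > 0 \<and> v i = 0 then \<infinity>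
      else ereal (\<Sum>i<n. (if u i = 0 then 0 else u i * ln (u i / v i)) - u i + v i))"

end

theory Submission
  imports Defs
begin

text \<open>The objective is continuous on every compact set of vectors on which the autoconvolution
  stays away from zero wherever y is positive, and it is coercive in two ways: a large
  coordinate x_k forces (x*x)_{2k} \<ge> x_k^2 and hence a large divergence, while
  (x*x)_i \<rightarrow> 0 at an index with y_i > 0 makes the term y_i log (y_i / (x*x)_i) blow up.
  So every sublevel set lies in a compact set of this kind, and the minimum is attained by
  Weierstrass' theorem.\<close>

definition idiv_term :: "real \<Rightarrow> real \<Rightarrow> real" where
  "idiv_term u v = (if u = 0 then 0 else u * ln (u / v)) - u + v"

lemma idiv_term_nonneg:
  assumes "0 \<le> u" "0 \<le> v" "0 < u \<Longrightarrow> 0 < v"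
  shows "0 \<le> idiv_term u v"
proof (cases "u = 0")
  case True
  then show ?thesis using assms by (simp add: idiv_term_def)
next
  case False
  then have u: "0 < u" and v: "0 < v" using assms by auto
  have "u * ln (v / u) \<le> u * (v / u - 1)"
    using u v by (intro mult_left_mono ln_le_minus_one) auto
  also have "\<dots> = v - u" using u by (simp add: field_simps)
  finally show ?thesis using u v by (simp add: idiv_term_def ln_div algebra_simps)
qed

lemma idiv_term_ge_half:
  assumes "0 \<le> u" "0 \<le> v" "0 < u \<Longrightarrow> 0 < v"
  shows "v / 2 - u \<le> idiv_term u v"
proof (cases "u = 0")
  case True
  then show ?thesis using assms by (simp add: idiv_term_def)
next
  case False
  then have u: "0 < u" and v: "0 < v" using assms by auto
  have "ln (v / u) = ln 2 + ln (v / (2 * u))" using u v by (simp add: ln_div ln_mult)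
  also have "\<dots> \<le> 1 + (v / (2 * u) - 1)"
    using u v ln_le_minus_one[of 2] by (intro add_mono ln_le_minus_one) auto
  finally have "u * ln (v / u) \<le> u * (v / (2 * u))" using u by (intro mult_left_mono) auto
  also have "\<dots> = v / 2" using u by simp
  finally show ?thesis using u v by (simp add: idiv_term_def ln_div algebra_simps)
qed

lemma idiv_term_ge_of_le_exp:
  assumes u: "0 < u" and v: "0 < v" and small: "v \<le> u * exp (- ((D + u) / u))"
  shows "D \<le> idiv_term u v"
proof -
  have "ln v \<le> ln u - (D + u) / u" using ln_mono[OF small v] u by (simp add: ln_mult)
  then have "(D + u) / u \<le> ln (u / v)" using u v by (simp add: ln_div)
  then have "D + u \<le> u * ln (u / v)" using u by (simp add: field_simps)
  then show ?thesis using u v by (simp add: idiv_term_def)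
qed

lemma idiv_eq_sum_idiv_term:
  assumes "\<And>i. i < n \<Longrightarrow> 0 < u i \<Longrightarrow> 0 < v i"
  shows "idiv n u v = ereal (\<Sum>i<n. idiv_term (u i) (v i))"
  using assms unfolding idiv_def idiv_term_def by force

lemma idiv_ge_idiv_term:
  assumes nonneg: "\<And>i. i < n \<Longrightarrow> 0 \<le> u i \<and> 0 \<le> v i" and "i < n"
  shows "ereal (idiv_term (u i) (v i)) \<le> idiv n u v"
proof (cases "\<exists>j<n. 0 < u j \<and> v j = 0")
  case True
  then show ?thesis by (simp add: idiv_def)
next
  case False
  then have pos: "\<And>j. j < n \<Longrightarrow> 0 < u j \<Longrightarrow> 0 < v j"
    using nonneg by (metis less_eq_real_def)
  have "idiv_term (u i) (v i) \<le> (\<Sum>j<n. idiv_term (u j) (v j))"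
    using \<open>i < n\<close> nonneg pos by (intro member_le_sum idiv_term_nonneg) auto
  then show ?thesis using pos by (simp add: idiv_eq_sum_idiv_term)
qed

lemma idiv_ge_half_coordinate:
  assumes "\<And>i. i < n \<Longrightarrow> 0 \<le> u i \<and> 0 \<le> v i" and "i < n"
  shows "ereal (v i / 2 - u i) \<le> idiv n u v"
proof (cases "0 < u i \<and> v i = 0")
  case True
  then show ?thesis using \<open>i < n\<close> by (auto simp: idiv_def)
next
  case False
  then have "v i / 2 - u i \<le> idiv_term (u i) (v i)"
    using assms by (intro idiv_term_ge_half) (auto simp: less_eq_real_def)
  then have "ereal (v i / 2 - u i) \<le> ereal (idiv_term (u i) (v i))" by simp
  also have "\<dots> \<le> idiv n u v" using assms by (rule idiv_ge_idiv_term)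
  finally show ?thesis .
qed

lemma idiv_ge_of_small_coordinate:
  assumes "\<And>i. i < n \<Longrightarrow> 0 \<le> u i \<and> 0 \<le> v i" and "i < n" and "0 < u i"
    and "v i \<le> u i * exp (- ((D + u i) / u i))"
  shows "ereal D \<le> idiv n u v"
proof (cases "v i = 0")
  case True
  then show ?thesis using assms(2,3) by (auto simp: idiv_def)
next
  case False
  then have "D \<le> idiv_term (u i) (v i)"
    using assms by (intro idiv_term_ge_of_le_exp) (auto simp: less_eq_real_def)
  then have "ereal D \<le> ereal (idiv_term (u i) (v i))" by simp
  also have "\<dots> \<le> idiv n u v" using assms(1,2) by (rule idiv_ge_idiv_term)
  finally show ?thesis .
qed

lemma continuous_on_idiv:
  assumes "\<And>i. i < n \<Longrightarrow> 0 \<le> u i"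
    and "\<And>i. i < n \<Longrightarrow> continuous_on S (\<lambda>x. v x i)"
    and "\<And>x i. x \<in> S \<Longrightarrow> i < n \<Longrightarrow> 0 < u i \<Longrightarrow> 0 < v x i"
  shows "continuous_on S (\<lambda>x. idiv n u (v x))"
proof -
  have "continuous_on S (\<lambda>x. idiv_term (u i) (v x i))" if "i < n" for i
  proof (cases "u i = 0")
    case True
    then show ?thesis using assms(2)[OF that] by (simp add: idiv_term_def)
  next
    case False
    then have "\<forall>x\<in>S. 0 < v x i" using assms(1,3) that by (auto simp: less_eq_real_def)
    then show ?thesis using False unfolding idiv_term_def
      by (simp, intro continuous_intros assms(2)[OF that]) auto
  qed
  then have "continuous_on S (\<lambda>x. ereal (\<Sum>i<n. idiv_term (u i) (v x i)))"
    by (intro continuous_intros) auto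
  then show ?thesis
    by (rule continuous_on_cong[THEN iffD1, rotated 2])
       (use assms(3) in \<open>auto simp: idiv_eq_sum_idiv_term\<close>)
qed

lemma continuous_on_autoconv [continuous_intros]: "continuous_on S (\<lambda>x. autoconv x i)"
proof -
  have coordinate: "continuous_on S (\<lambda>x :: nat \<Rightarrow> real. x k)" for k
    by (rule continuous_on_subset[OF continuous_on_product_coordinates]) simp
  show ?thesis unfolding autoconv_def by (intro continuous_intros coordinate)
qed

lemma autoconv_nonneg: "(\<And>k. 0 \<le> x k) \<Longrightarrow> 0 \<le> autoconv x i"
  unfolding autoconv_def by (intro sum_nonneg) (simp add: mult_nonneg_nonneg)

lemma autoconv_ge_square:
  assumes "\<And>k. 0 \<le> x k"
  shows "(x k)\<^sup>2 \<le> autoconv x (2 * k)"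
proof -
  have "x (2 * k - k) * x k \<le> (\<Sum>j\<le>2 * k. x (2 * k - j) * x j)"
    using assms by (intro member_le_sum) (auto simp: mult_nonneg_nonneg)
  then show ?thesis by (simp add: autoconv_def power2_eq_square)
qed

lemma one_le_autoconv_ones:
  assumes "i \<le> 2 * m"
  shows "1 \<le> autoconv (\<lambda>k. if k \<le> m then 1 else 0) i"
proof -
  let ?x = "\<lambda>k. if k \<le> m then 1 else 0 :: real"
  have "?x (i - min i m) * ?x (min i m) \<le> (\<Sum>j\<le>i. ?x (i - j) * ?x j)"
    by (intro member_le_sum) auto
  moreover have "i - min i m \<le> m" using assms by linarith
  ultimately show ?thesis by (simp add: autoconv_def)
qed

definition nonneg_orthant :: "nat \<Rightarrow> (nat \<Rightarrow> real) set" where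
  "nonneg_orthant m = {x. (\<forall>k. 0 \<le> x k) \<and> (\<forall>k>m. x k = 0)}"

lemma compact_nonneg_orthant_box: "compact {x \<in> nonneg_orthant m. \<forall>k. x k \<le> R}"
proof -
  define S where "S k = (if k \<le> m then {0..R} else {0})" for k
  have "compactin (product_topology (\<lambda>_. euclidean) UNIV) (PiE UNIV S)"
    by (subst compactin_PiE) (auto simp: S_def)
  moreover have "PiE UNIV S = {x \<in> nonneg_orthant m. \<forall>k. x k \<le> R}"
  proof (intro equalityI subsetI)
    fix x assume "x \<in> PiE UNIV S"
    then have x: "x k \<in> S k" for k by blast
    have "0 \<le> R" using x[of 0] by (simp add: S_def)
    then have "0 \<le> x k \<and> x k \<le> R \<and> (m < k \<longrightarrow> x k = 0)" for k
      using x[of k] by (cases "k \<le> m") (auto simp: S_def)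
    then show "x \<in> {x \<in> nonneg_orthant m. \<forall>k. x k \<le> R}" by (simp add: nonneg_orthant_def)
  next
    fix x assume x: "x \<in> {x \<in> nonneg_orthant m. \<forall>k. x k \<le> R}"
    then show "x \<in> PiE UNIV S" by (auto simp: S_def nonneg_orthant_def)
  qed
  ultimately show ?thesis by (simp add: euclidean_product_topology)
qed

lemma idiv_autoconv_gt_of_large_coordinate:
  assumes x: "x \<in> nonneg_orthant m" and y: "\<And>i. i \<le> 2 * m \<Longrightarrow> 0 \<le> y i"
    and "k \<le> m" and large: "2 * (C + y (2 * k)) < (x k)\<^sup>2"
  shows "ereal C < idiv (2 * m + 1) y (autoconv x)"
proof -
  have nonneg: "0 \<le> x j" for j using x by (simp add: nonneg_orthant_def)
  have "C < autoconv x (2 * k) / 2 - y (2 * k)"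
    using large autoconv_ge_square[of x k] nonneg by fastforce
  also have "ereal \<dots> \<le> idiv (2 * m + 1) y (autoconv x)"
    using \<open>k \<le> m\<close> y by (intro idiv_ge_half_coordinate) (auto intro: autoconv_nonneg nonneg)
  finally show ?thesis by simp
qed

lemma idiv_autoconv_sublevel_bounds:
  assumes y: "\<And>i. i \<le> 2 * m \<Longrightarrow> 0 \<le> y i" and x: "x \<in> nonneg_orthant m"
    and le: "idiv (2 * m + 1) y (autoconv x) \<le> ereal C"
  shows "x k \<le> 2 * (\<bar>C\<bar> + (\<Sum>i\<le>2 * m. y i)) + 1"
    and "i \<le> 2 * m \<Longrightarrow> 0 < y i \<Longrightarrow> y i * exp (- ((C + 1 + y i) / y i)) \<le> autoconv x i"
proof -
  define Y where "Y = (\<Sum>i\<le>2 * m. y i)"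
  define R where "R = 2 * (\<bar>C\<bar> + Y) + 1"
  have "0 \<le> Y" unfolding Y_def using y by (intro sum_nonneg) auto
  then have R: "1 \<le> R" "2 * (C + Y) \<le> R" by (auto simp: R_def)
  then have "R \<le> R\<^sup>2" using mult_left_mono[of 1 R R] by (simp add: power2_eq_square)
  have "x k \<le> R"
  proof (rule ccontr)
    assume "\<not> x k \<le> R"
    then have "k \<le> m" "R\<^sup>2 < (x k)\<^sup>2"
      using x R by (cases "k \<le> m", auto simp: nonneg_orthant_def intro!: power_strict_mono)
    have "y (2 * k) \<le> Y" unfolding Y_def using \<open>k \<le> m\<close> y by (intro member_le_sum) auto
    then have "2 * (C + y (2 * k)) \<le> R" using R by (simp add: algebra_simps)
    also have "\<dots> \<le> R\<^sup>2" by fact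
    also have "\<dots> < (x k)\<^sup>2" by fact
    finally have "2 * (C + y (2 * k)) < (x k)\<^sup>2" .
    with x y \<open>k \<le> m\<close> have "ereal C < idiv (2 * m + 1) y (autoconv x)"
      by (rule idiv_autoconv_gt_of_large_coordinate)
    then show False using le by simp
  qed
  then show "x k \<le> 2 * (\<bar>C\<bar> + (\<Sum>i\<le>2 * m. y i)) + 1" by (simp add: R_def Y_def)
  assume "i \<le> 2 * m" "0 < y i"
  show "y i * exp (- ((C + 1 + y i) / y i)) \<le> autoconv x i"
  proof (rule ccontr)
    assume "\<not> ?thesis"
    then have "ereal (C + 1) \<le> idiv (2 * m + 1) y (autoconv x)"
      using \<open>i \<le> 2 * m\<close> \<open>0 < y i\<close> x y
      by (intro idiv_ge_of_small_coordinate) (auto simp: nonneg_orthant_def intro: autoconv_nonneg)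
    then have "ereal (C + 1) \<le> ereal C" using le by (rule order_trans)
    then show False by simp
  qed
qed

lemma idiv_autoconv_sublevel_in_compact:
  assumes y: "\<And>i. i \<le> 2 * m \<Longrightarrow> 0 \<le> y i"
  obtains K where "compact K" "K \<subseteq> nonneg_orthant m"
    "{x \<in> nonneg_orthant m. idiv (2 * m + 1) y (autoconv x) \<le> ereal C} \<subseteq> K"
    "continuous_on K (\<lambda>x. idiv (2 * m + 1) y (autoconv x))"
proof -
  define P where "P = {i. i \<le> 2 * m \<and> 0 < y i}"
  define t where "t i = y i * exp (- ((C + 1 + y i) / y i))" for i
  define K where "K = {x \<in> nonneg_orthant m. \<forall>k. x k \<le> 2 * (\<bar>C\<bar> + (\<Sum>i\<le>2 * m. y i)) + 1}
    \<inter> (\<Inter>i\<in>P. {x. t i \<le> autoconv x i})"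
  have closed_level: "closed {x. t i \<le> autoconv x i}" for i
    by (intro closed_Collect_le continuous_on_const continuous_on_autoconv)
  have "compact K" unfolding K_def
    by (intro compact_Int_closed compact_nonneg_orthant_box closed_INT ballI closed_level)
  moreover have "K \<subseteq> nonneg_orthant m" by (auto simp: K_def)
  moreover have "{x \<in> nonneg_orthant m. idiv (2 * m + 1) y (autoconv x) \<le> ereal C} \<subseteq> K"
  proof (intro subsetI, elim CollectE conjE)
    fix x assume x: "x \<in> nonneg_orthant m" and le: "idiv (2 * m + 1) y (autoconv x) \<le> ereal C"
    have "x k \<le> 2 * (\<bar>C\<bar> + (\<Sum>i\<le>2 * m. y i)) + 1" for k
      using y x le by (rule idiv_autoconv_sublevel_bounds(1))
    moreover have "t i \<le> autoconv x i" if "i \<in> P" for i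
    proof -
      have "i \<le> 2 * m" "0 < y i" using that by (auto simp: P_def)
      with y x le show ?thesis unfolding t_def by (rule idiv_autoconv_sublevel_bounds(2))
    qed
    ultimately show "x \<in> K" using x by (simp add: K_def)
  qed
  moreover have "continuous_on K (\<lambda>x. idiv (2 * m + 1) y (autoconv x))"
  proof (rule continuous_on_idiv)
    show "0 \<le> y i" if "i < 2 * m + 1" for i using y that by simp
    show "continuous_on K (\<lambda>x. autoconv x i)" for i by (rule continuous_on_autoconv)
    fix x i assume "x \<in> K" "i < 2 * m + 1" "0 < y i"
    then have "0 < t i" "t i \<le> autoconv x i" by (auto simp: t_def K_def P_def)
    then show "0 < autoconv x i" by linarith
  qed
  ultimately show thesis by (rule that)
qed

lemma continuous_attains_inf_sublevel:
  fixes f :: "'a::topological_space \<Rightarrow> 'b::linorder_topology"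
  assumes "compact K" "K \<subseteq> A" "continuous_on K f" "x\<^sub>0 \<in> A" "{x \<in> A. f x \<le> f x\<^sub>0} \<subseteq> K"
  shows "\<exists>x\<in>A. \<forall>x'\<in>A. f x \<le> f x'"
proof -
  obtain x where "x \<in> K" and min: "\<forall>x'\<in>K. f x \<le> f x'"
    using continuous_attains_inf[of K f] assms by blast
  have "f x \<le> f x\<^sub>0" using assms(4,5) min by blast
  then have "f x \<le> f x'" if "x' \<in> A" for x'
    using assms(5) min that by (cases "f x' \<le> f x\<^sub>0") auto
  then show ?thesis using \<open>x \<in> K\<close> assms(2) by blast
qed

theorem proposition1:
  fixes m :: nat and y :: "nat \<Rightarrow> real"
  assumes "m \<ge> 1"
    and "\<And>i. i \<le> 2 * m \<Longrightarrow> y i \<ge> 0"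
  shows "\<exists>x :: nat \<Rightarrow> real.
           (\<forall>k. x k \<ge> 0) \<and> (\<forall>k>m. x k = 0) \<and>
           (\<forall>x' :: nat \<Rightarrow> real. (\<forall>k. x' k \<ge> 0) \<and> (\<forall>k>m. x' k = 0) \<longrightarrow>
              idiv (2 * m + 1) y (autoconv x) \<le> idiv (2 * m + 1) y (autoconv x'))"
proof -
  define F where "F = (\<lambda>x. idiv (2 * m + 1) y (autoconv x))"
  define x\<^sub>0 :: "nat \<Rightarrow> real" where "x\<^sub>0 = (\<lambda>k. if k \<le> m then 1 else 0)"
  have x\<^sub>0: "x\<^sub>0 \<in> nonneg_orthant m" by (simp add: x\<^sub>0_def nonneg_orthant_def)
  have "0 < autoconv x\<^sub>0 i" if "i < 2 * m + 1" for i
    using one_le_autoconv_ones[of i m] that by (simp add: x\<^sub>0_def)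
  then have "F x\<^sub>0 = ereal (\<Sum>i<2 * m + 1. idiv_term (y i) (autoconv x\<^sub>0 i))"
    unfolding F_def by (rule idiv_eq_sum_idiv_term)
  then obtain C where C: "F x\<^sub>0 = ereal C" by (rule that)
  obtain K where K: "compact K" "K \<subseteq> nonneg_orthant m"
    "{x \<in> nonneg_orthant m. F x \<le> ereal C} \<subseteq> K" "continuous_on K F"
    using idiv_autoconv_sublevel_in_compact[of m y C] assms(2) unfolding F_def by blast
  have "\<exists>x\<in>nonneg_orthant m. \<forall>x'\<in>nonneg_orthant m. F x \<le> F x'"
    using K(3) unfolding C[symmetric] by (rule continuous_attains_inf_sublevel[OF K(1,2,4) x\<^sub>0])
  then obtain x where "x \<in> nonneg_orthant m" "\<forall>x'\<in>nonneg_orthant m. F x \<le> F x'" ..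
  then show ?thesis unfolding F_def nonneg_orthant_def by (intro exI[of _ x]) simp
qed

end
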